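(* Let $p, \sigma \in \mathbb{R}$. The equation \[ -u''(x) = |x|^\sigma u(x)^p \quad \text{in } \mathbb{R} \] admits at least one non-trivial, non-negative classical solution if and only if one of the following holds: (1) $\sigma < -2$ and $p > -1-\sigma$; or (2) $-2 < \sigma < 0$ and $p < -1-\sigma$.
   Context: A classical solution is a function $u$ belonging to $C^2(\mathbb{R})$ if $\sigma \geq 0$, and to $C(\mathbb{R}) \cap C^2(\mathbb{R} \setminus \{0\})$ if $\sigma < 0$, such that the equation holds pointwise for all $x \in \mathbb{R}$ when $\sigma \geq 0$ and for all $x \neq 0$ when $\sigma < 0$. For $p=0$ the term $u^p$ is understood as $1$, and for $p<0$ it is required that $u>0$ at each point where the equation is imposed. *)

theory Defs
  imports Complex_Main
begin

text \<open>The weight |x|^sigma, with the convention 0^0 = 1 (Isabelle's powr has 0 powr 0 = 0).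
  For sigma < 0 it is only used at x <> 0.\<close>
definition weight :: "real \<Rightarrow> real \<Rightarrow> real" where
  "weight \<sigma> x = (if \<sigma> = 0 then 1 else \<bar>x\<bar> powr \<sigma>)"

text \<open>The nonlinearity t^p for t >= 0 (t > 0 when p < 0); t^0 is understood as 1.\<close>
definition upow :: "real \<Rightarrow> real \<Rightarrow> real" where
  "upow t p = (if p = 0 then 1 else t powr p)"

definition sol_domain :: "real \<Rightarrow> real set" where
  "sol_domain \<sigma> = (if \<sigma> \<ge> 0 then UNIV else - {0})"

definition classical_solution :: "real \<Rightarrow> real \<Rightarrow> (real \<Rightarrow> real) \<Rightarrow> bool" where
  "classical_solution \<sigma> p u \<longleftrightarrow>
     continuous_on UNIV u \<and>
     (\<exists>u' u''. \<forall>x \<in> sol_domain \<sigma>.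
        (u has_real_derivative u' x) (at x) \<and>
        (u' has_real_derivative u'' x) (at x) \<and>
        isCont u'' x \<and>
        (p < 0 \<longrightarrow> u x > 0) \<and>
        - u'' x = weight \<sigma> x * upow (u x) p)"

end

theory Submission
  imports Defs "HOL-Real_Asymp.Real_Asymp"
begin

text \<open>A nonnegative solution is concave wherever the equation holds. For \<open>sigma \<ge> 0\<close> it is
  concave and nonnegative on the whole line, hence constant, hence zero. For \<open>sigma < 0\<close> a
  nontrivial solution restricts, after a reflection if necessary, to a positive nondecreasing
  solution on \<open>(0, \<infinity>)\<close>. If \<open>sigma \<ge> -2\<close> and \<open>sigma + p \<ge> -1\<close>, lower bounds for \<open>u\<close> give
  \<open>u'' t \<le> - L * t powr beta\<close> with a non-integrable weight (\<open>beta \<ge> -1\<close>), which drives \<open>u'\<close>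
  below zero; the borderline case \<open>sigma = -2\<close>, \<open>p = 1\<close> is Euler's equation, excluded by Sturm
  comparison. The Kelvin transform \<open>v x = x * u (1 / x)\<close> turns solutions for \<open>(sigma, p)\<close> into
  solutions for \<open>(-3 - sigma - p, p)\<close> and exchanges this region with \<open>sigma \<le> -2\<close>,
  \<open>sigma + p \<le> -1\<close>. In the remaining range \<open>c * \<bar>x\<bar> powr a\<close> with \<open>a = (sigma + 2) / (1 - p)\<close>
  is an explicit solution.\<close>

lemma concave_le_tangent:
  fixes f f' f'' :: "real \<Rightarrow> real"
  assumes "a \<le> b"
    and f': "\<And>x. a \<le> x \<Longrightarrow> x \<le> b \<Longrightarrow> (f has_real_derivative f' x) (at x)"
    and f'': "\<And>x. a \<le> x \<Longrightarrow> x \<le> b \<Longrightarrow> (f' has_real_derivative f'' x) (at x)"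
    and concave: "\<And>x. a \<le> x \<Longrightarrow> x \<le> b \<Longrightarrow> f'' x \<le> 0"
  shows "f b \<le> f a + f' a * (b - a)" "f a \<le> f b + f' b * (a - b)"
proof -
  have f'_antimono: "f' y \<le> f' x" if "a \<le> x" "x \<le> y" "y \<le> b" for x y
  proof (rule DERIV_nonpos_imp_nonincreasing[OF \<open>x \<le> y\<close>])
    fix z assume "x \<le> z" "z \<le> y"
    with that show "\<exists>w. (f' has_real_derivative w) (at z) \<and> w \<le> 0"
      using f'' concave by (meson order_trans)
  qed
  have "(\<lambda>x. f x - f' a * x) b \<le> (\<lambda>x. f x - f' a * x) a"
  proof (rule DERIV_nonpos_imp_nonincreasing[OF \<open>a \<le> b\<close>])
    fix x assume "a \<le> x" "x \<le> b"
    then show "\<exists>y. ((\<lambda>x. f x - f' a * x) has_real_derivative y) (at x) \<and> y \<le> 0"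
      using f'[of x] f'_antimono[of a x]
      by (intro exI[of _ "f' x - f' a"]) (auto intro!: derivative_eq_intros)
  qed
  then show "f b \<le> f a + f' a * (b - a)" by (simp add: algebra_simps)
  have "(\<lambda>x. f x - f' b * x) a \<le> (\<lambda>x. f x - f' b * x) b"
  proof (rule DERIV_nonneg_imp_nondecreasing[OF \<open>a \<le> b\<close>])
    fix x assume "a \<le> x" "x \<le> b"
    then show "\<exists>y. ((\<lambda>x. f x - f' b * x) has_real_derivative y) (at x) \<and> y \<ge> 0"
      using f'[of x] f'_antimono[of x b]
      by (intro exI[of _ "f' x - f' b"]) (auto intro!: derivative_eq_intros)
  qed
  then show "f a \<le> f b + f' b * (a - b)" by (simp add: algebra_simps)
qed

lemma has_real_derivative_comp_reciprocal:
  assumes "(f has_real_derivative D) (at (1 / x))" "x \<noteq> 0"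
  shows "((\<lambda>x. f (1 / x)) has_real_derivative - D / x\<^sup>2) (at x)"
proof -
  have "((\<lambda>x. 1 / x) has_real_derivative - 1 / x\<^sup>2) (at x)"
    using assms(2) by (auto intro!: derivative_eq_intros simp: power2_eq_square)
  from DERIV_chain2[where g = "\<lambda>x. 1 / x", OF assms(1) this] show ?thesis
    by simp
qed

lemma filterlim_at_bot_imp_ex_less:
  fixes f :: "real \<Rightarrow> real"
  assumes "filterlim f at_bot at_top"
  shows "\<exists>t\<ge>x0. f t < B"
proof -
  have "\<forall>\<^sub>F t in at_top. x0 \<le> t \<and> f t < B"
    using eventually_ge_at_top[of x0] assms[unfolded filterlim_at_bot_dense, rule_format, of B]
    by (rule eventually_conj)
  then show ?thesis
    by (auto simp: eventually_at_top_linorder)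
qed

definition powr_antideriv :: "real \<Rightarrow> real \<Rightarrow> real" where
  "powr_antideriv \<beta> t = (if \<beta> = -1 then ln t else t powr (\<beta> + 1) / (\<beta> + 1))"

lemma powr_antideriv_minus_one: "powr_antideriv (-1) = ln"
  by (simp add: fun_eq_iff powr_antideriv_def)

lemma powr_antideriv_eq: "\<beta> \<noteq> -1 \<Longrightarrow> powr_antideriv \<beta> = (\<lambda>t. t powr (\<beta> + 1) / (\<beta> + 1))"
  by (simp add: fun_eq_iff powr_antideriv_def)

lemma has_real_derivative_powr_antideriv:
  assumes "t > 0"
  shows "(powr_antideriv \<beta> has_real_derivative t powr \<beta>) (at t)"
proof (cases "\<beta> = -1")
  case True
  then show ?thesis
    using assms by (auto intro!: derivative_eq_intros simp: powr_antideriv_minus_one powr_minus_divide)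
next
  case False
  then show ?thesis
    using assms by (auto intro!: derivative_eq_intros simp: powr_antideriv_eq)
qed

lemma powr_antideriv_at_top:
  assumes "\<beta> \<ge> -1"
  shows "filterlim (powr_antideriv \<beta>) at_top at_top"
proof (cases "\<beta> = -1")
  case True
  then show ?thesis by (simp add: powr_antideriv_minus_one ln_at_top)
next
  case False
  then have "\<beta> + 1 > 0" using assms by simp
  then have "filterlim (\<lambda>t. t powr (\<beta> + 1) * inverse (\<beta> + 1)) at_top at_top"
    by (intro filterlim_at_top_mult_tendsto_pos[OF tendsto_const] real_powr_at_top) auto
  then show ?thesis
    using False by (simp add: powr_antideriv_eq divide_inverse)
qed

lemma powr_antideriv_tendsto_zero:
  assumes "\<beta> < -1"
  shows "(powr_antideriv \<beta> \<longlongrightarrow> 0) at_top"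
proof -
  have "((\<lambda>t. t powr (\<beta> + 1) / (\<beta> + 1)) \<longlongrightarrow> 0 / (\<beta> + 1)) at_top"
    using assms by (intro tendsto_divide tendsto_neg_powr filterlim_ident) auto
  then show ?thesis
    using assms by (simp add: powr_antideriv_eq)
qed

lemma deriv_le_neg_powr_imp_le:
  fixes d d' :: "real \<Rightarrow> real"
  assumes "x0 > 0" "x0 \<le> t"
    and d': "\<And>t. x0 \<le> t \<Longrightarrow> (d has_real_derivative d' t) (at t)"
    and bound: "\<And>t. x0 \<le> t \<Longrightarrow> d' t \<le> - c * t powr \<beta>"
  shows "d t + c * powr_antideriv \<beta> t \<le> d x0 + c * powr_antideriv \<beta> x0"
proof (rule DERIV_nonpos_imp_nonincreasing[OF \<open>x0 \<le> t\<close>])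
  fix x assume "x0 \<le> x" "x \<le> t"
  then have "((\<lambda>t. d t + c * powr_antideriv \<beta> t) has_real_derivative d' x + c * x powr \<beta>) (at x)"
    using \<open>x0 > 0\<close> by (auto intro!: derivative_eq_intros d' has_real_derivative_powr_antideriv)
  moreover have "d' x + c * x powr \<beta> \<le> 0"
    using bound[of x] \<open>x0 \<le> x\<close> by simp
  ultimately show "\<exists>y. ((\<lambda>t. d t + c * powr_antideriv \<beta> t) has_real_derivative y) (at x) \<and> y \<le> 0"
    by blast
qed

lemma deriv_le_neg_powr_imp_at_bot:
  fixes d d' :: "real \<Rightarrow> real"
  assumes "x0 > 0" "c > 0" "\<beta> \<ge> -1"
    and "\<And>t. x0 \<le> t \<Longrightarrow> (d has_real_derivative d' t) (at t)"
    and "\<And>t. x0 \<le> t \<Longrightarrow> d' t \<le> - c * t powr \<beta>"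
  shows "filterlim d at_bot at_top"
proof -
  define K where "K = d x0 + c * powr_antideriv \<beta> x0"
  have "filterlim (\<lambda>t. - K + c * powr_antideriv \<beta> t) at_top at_top"
    using assms by (intro filterlim_tendsto_add_at_top[OF tendsto_const]
        filterlim_tendsto_pos_mult_at_top[OF tendsto_const] powr_antideriv_at_top)
  moreover have "\<forall>\<^sub>F t in at_top. - K + c * powr_antideriv \<beta> t \<le> - d t"
    using eventually_ge_at_top[of x0]
    by eventually_elim (use deriv_le_neg_powr_imp_le assms in \<open>fastforce simp: K_def\<close>)
  ultimately have "filterlim (\<lambda>t. - d t) at_top at_top"
    by (rule filterlim_at_top_mono)
  then show ?thesis
    by (simp add: filterlim_uminus_at_bot)
qed

lemma deriv_le_neg_powr_lower_bound:
  fixes d d' :: "real \<Rightarrow> real"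
  assumes "x0 > 0" "\<beta> < -1"
    and "\<And>t. x0 \<le> t \<Longrightarrow> (d has_real_derivative d' t) (at t)"
    and "\<And>t. x0 \<le> t \<Longrightarrow> d' t \<le> - c * t powr \<beta>"
    and nonneg: "\<And>t. x0 \<le> t \<Longrightarrow> 0 \<le> d t"
  shows "c * x0 powr (\<beta> + 1) / (- \<beta> - 1) \<le> d x0"
proof -
  have "0 \<le> d x0 + c * powr_antideriv \<beta> x0"
  proof (rule tendsto_le[OF _ tendsto_const])
    show "((\<lambda>t. c * powr_antideriv \<beta> t) \<longlongrightarrow> 0) at_top"
      using assms by (intro tendsto_mult_right_zero powr_antideriv_tendsto_zero)
    show "\<forall>\<^sub>F t in at_top. c * powr_antideriv \<beta> t \<le> d x0 + c * powr_antideriv \<beta> x0"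
      using eventually_ge_at_top[of x0]
    proof eventually_elim
      case (elim t)
      then show ?case
        using deriv_le_neg_powr_imp_le[of x0 t d d' c \<beta>] nonneg[of t] assms by fastforce
    qed
  qed simp
  then show ?thesis
    using assms by (simp add: powr_antideriv_def field_simps)
qed

lemma concave_nonneg_imp_deriv_nonneg:
  fixes f f' f'' :: "real \<Rightarrow> real"
  assumes f': "\<And>x. a < x \<Longrightarrow> (f has_real_derivative f' x) (at x)"
    and f'': "\<And>x. a < x \<Longrightarrow> (f' has_real_derivative f'' x) (at x)"
    and concave: "\<And>x. a < x \<Longrightarrow> f'' x \<le> 0"
    and nonneg: "\<And>x. a < x \<Longrightarrow> 0 \<le> f x"
    and "a < x"
  shows "0 \<le> f' x"
proof (rule ccontr)
  assume neg: "\<not> 0 \<le> f' x"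
  define t where "t = x + (f x + 1) / - f' x"
  have "x \<le> t"
    using nonneg[OF \<open>a < x\<close>] neg by (simp add: t_def divide_nonneg_neg)
  then have "f t \<le> f x + f' x * (t - x)"
    using concave_le_tangent(1)[of x t f f' f''] f' f'' concave \<open>a < x\<close> by simp
  also have "\<dots> = -1"
    using neg by (simp add: t_def)
  finally show False
    using nonneg[of t] \<open>a < x\<close> \<open>x \<le> t\<close> by simp
qed

lemma concave_nonneg_imp_deriv_nonpos:
  fixes f f' f'' :: "real \<Rightarrow> real"
  assumes f': "\<And>x. x < b \<Longrightarrow> (f has_real_derivative f' x) (at x)"
    and f'': "\<And>x. x < b \<Longrightarrow> (f' has_real_derivative f'' x) (at x)"
    and concave: "\<And>x. x < b \<Longrightarrow> f'' x \<le> 0"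
    and nonneg: "\<And>x. x < b \<Longrightarrow> 0 \<le> f x"
    and "x < b"
  shows "f' x \<le> 0"
proof (rule ccontr)
  assume pos: "\<not> f' x \<le> 0"
  define t where "t = x - (f x + 1) / f' x"
  have "t \<le> x"
    using nonneg[OF \<open>x < b\<close>] pos by (simp add: t_def)
  then have "f t \<le> f x + f' x * (t - x)"
    using concave_le_tangent(2)[of t x f f' f''] f' f'' concave \<open>x < b\<close> by simp
  also have "\<dots> = -1"
    using pos by (simp add: t_def)
  finally show False
    using nonneg[of t] \<open>x < b\<close> \<open>t \<le> x\<close> by simp
qed

lemma concave_nonneg_deriv_eq_zero:
  fixes f f' f'' :: "real \<Rightarrow> real"
  assumes f': "\<And>x. (f has_real_derivative f' x) (at x)"
    and f'': "\<And>x. (f' has_real_derivative f'' x) (at x)"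
    and concave: "\<And>x. f'' x \<le> 0"
    and nonneg: "\<And>x. 0 \<le> f x"
  shows "f' x = 0"
  using concave_nonneg_imp_deriv_nonneg[where a = "x - 1" and x = x, OF f' f'' concave nonneg]
    concave_nonneg_imp_deriv_nonpos[where b = "x + 1" and x = x, OF f' f'' concave nonneg]
  by auto

lemma concave_nonneg_zero_imp_zero:
  fixes f f' f'' :: "real \<Rightarrow> real"
  assumes f': "\<And>x. a < x \<Longrightarrow> (f has_real_derivative f' x) (at x)"
    and f'': "\<And>x. a < x \<Longrightarrow> (f' has_real_derivative f'' x) (at x)"
    and concave: "\<And>x. a < x \<Longrightarrow> f'' x \<le> 0"
    and nonneg: "\<And>x. a < x \<Longrightarrow> 0 \<le> f x"
    and "a < x" "f x = 0" "a < y"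
  shows "f y = 0"
proof -
  have "f' x = 0"
  proof (rule DERIV_local_min[OF f'[OF \<open>a < x\<close>]])
    show "0 < x - a" using \<open>a < x\<close> by simp
    show "\<forall>y. \<bar>x - y\<bar> < x - a \<longrightarrow> f x \<le> f y"
      using nonneg \<open>f x = 0\<close> by (auto simp: abs_less_iff)
  qed
  have "f y \<le> f x + f' x * (y - x)"
  proof (cases "x \<le> y")
    case True
    then show ?thesis
      using concave_le_tangent(1)[of x y f f' f''] f' f'' concave \<open>a < x\<close> by simp
  next
    case False
    then show ?thesis
      using concave_le_tangent(2)[of y x f f' f''] f' f'' concave \<open>a < y\<close> by simp
  qed
  then show ?thesis
    using \<open>f x = 0\<close> \<open>f' x = 0\<close> nonneg[OF \<open>a < y\<close>] by simp
qed

lemma concave_mult_deriv_le: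
  fixes f f' f'' :: "real \<Rightarrow> real"
  assumes f': "\<And>x. 0 < x \<Longrightarrow> (f has_real_derivative f' x) (at x)"
    and f'': "\<And>x. 0 < x \<Longrightarrow> (f' has_real_derivative f'' x) (at x)"
    and concave: "\<And>x. 0 < x \<Longrightarrow> f'' x \<le> 0"
    and "isCont f 0" "0 \<le> f 0" "0 < x"
  shows "x * f' x \<le> f x"
proof -
  have "f 0 \<le> f x + f' x * (0 - x)"
  proof (rule tendsto_le[of "at_right 0"])
    show "(f \<longlongrightarrow> f 0) (at_right 0)"
      using \<open>isCont f 0\<close> by (simp add: isCont_def filterlim_at_split)
    show "((\<lambda>s. f x + f' x * (s - x)) \<longlongrightarrow> f x + f' x * (0 - x)) (at_right 0)"
      by (intro tendsto_intros)
    have "\<forall>\<^sub>F s in at_right 0. 0 < s \<and> s < x"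
      using \<open>0 < x\<close> by (auto simp: eventually_at_right_field intro!: exI[of _ x])
    then show "\<forall>\<^sub>F s in at_right 0. f s \<le> f x + f' x * (s - x)"
    proof eventually_elim
      case (elim s)
      then show ?case
        using concave_le_tangent(2)[of s x f f' f''] f' f'' concave by simp
    qed
  qed simp
  then show ?thesis
    using \<open>0 \<le> f 0\<close> by (simp add: mult.commute)
qed

lemma sqrt_sin_ln_derivs:
  fixes k x :: real
  assumes "k * k = 3 / 4" "0 < x"
  shows "((\<lambda>x. sqrt x * sin (k * ln x)) has_real_derivative
      (sin (k * ln x) / 2 + k * cos (k * ln x)) / sqrt x) (at x)"
    and "((\<lambda>x. (sin (k * ln x) / 2 + k * cos (k * ln x)) / sqrt x) has_real_derivative
      - (sqrt x * sin (k * ln x)) / x\<^sup>2) (at x)"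
proof -
  have sqrt: "sqrt x * sqrt x = x" "sqrt x * (sqrt x * y) = x * y" "sqrt x > 0" for y
    using \<open>0 < x\<close> by (simp_all add: mult.assoc[symmetric])
  have k2: "k * (k * y) = 3 / 4 * y" for y
    using assms(1) by (simp add: mult.assoc[symmetric])
  show "((\<lambda>x. sqrt x * sin (k * ln x)) has_real_derivative
      (sin (k * ln x) / 2 + k * cos (k * ln x)) / sqrt x) (at x)"
    using \<open>0 < x\<close> sqrt by (auto intro!: derivative_eq_intros simp: field_simps)
  show "((\<lambda>x. (sin (k * ln x) / 2 + k * cos (k * ln x)) / sqrt x) has_real_derivative
      - (sqrt x * sin (k * ln x)) / x\<^sup>2) (at x)"
    using \<open>0 < x\<close> sqrt
    by (auto intro!: derivative_eq_intros simp: field_simps power2_eq_square k2 sqrt(1,2))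
qed

text \<open>Sturm comparison: the Wronskian of \<open>u\<close> and the oscillating solution
  \<open>z x = sqrt x * sin (k * ln x)\<close> of the same equation is constant, but it is positive
  at \<open>1\<close> and negative at the next zero \<open>exp (pi / k)\<close> of \<open>z\<close>.\<close>

lemma euler_equation_no_positive_solution:
  fixes u u' u'' :: "real \<Rightarrow> real"
  assumes u': "\<And>x. 0 < x \<Longrightarrow> (u has_real_derivative u' x) (at x)"
    and u'': "\<And>x. 0 < x \<Longrightarrow> (u' has_real_derivative u'' x) (at x)"
    and euler: "\<And>x. 0 < x \<Longrightarrow> x\<^sup>2 * u'' x = - u x"
    and pos: "\<And>x. 0 < x \<Longrightarrow> 0 < u x"
  shows False
proof -
  define k :: real where "k = sqrt 3 / 2"
  have k: "k > 0" "k * k = 3 / 4"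
    by (simp_all add: k_def)
  define z where "z x = sqrt x * sin (k * ln x)" for x
  define z' where "z' x = (sin (k * ln x) / 2 + k * cos (k * ln x)) / sqrt x" for x
  have z': "(z has_real_derivative z' x) (at x)"
    and z'': "(z' has_real_derivative - z x / x\<^sup>2) (at x)" if "0 < x" for x
    unfolding z_def[abs_def] z'_def[abs_def] using sqrt_sin_ln_derivs[OF k(2) that] by simp_all
  define W where "W x = u x * z' x - u' x * z x" for x
  have W': "(W has_real_derivative 0) (at x)" if "0 < x" for x
  proof -
    have "(W has_real_derivative u' x * z' x + u x * (- z x / x\<^sup>2) - (u'' x * z x + u' x * z' x)) (at x)"
      unfolding W_def using that by (auto intro!: derivative_eq_intros u' u'' z' z'')
    moreover have "u x = - (x\<^sup>2 * u'' x)"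
      using euler[OF that] by simp
    then have "u x * (- z x / x\<^sup>2) = u'' x * z x"
      using that by simp
    ultimately show ?thesis by simp
  qed
  define X where "X = exp (pi / k)"
  have "X > 1"
    using k by (simp add: X_def)
  have "W X = W 1"
    using \<open>X > 1\<close> W' by (intro DERIV_isconst3[of 0 "X + 1"]) auto
  moreover have "W 1 > 0"
    using pos[of 1] k by (simp add: W_def z_def z'_def)
  moreover have "k * ln X = pi"
    using k by (simp add: X_def)
  then have "W X < 0"
    using pos[of X] \<open>X > 1\<close> k by (simp add: W_def z_def z'_def)
  ultimately show False by simp
qed

text \<open>The hypothesis \<open>mult_deriv_le\<close> is what remains of \<open>0 \<le> u 0\<close> on the open half-line.\<close>

locale halfline_solution =
  fixes u u' u'' :: "real \<Rightarrow> real" and \<sigma> p :: real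
  assumes has_deriv: "\<And>x. 0 < x \<Longrightarrow> (u has_real_derivative u' x) (at x)"
    and has_deriv2: "\<And>x. 0 < x \<Longrightarrow> (u' has_real_derivative u'' x) (at x)"
    and pos: "\<And>x. 0 < x \<Longrightarrow> 0 < u x"
    and deriv_nonneg: "\<And>x. 0 < x \<Longrightarrow> 0 \<le> u' x"
    and mult_deriv_le: "\<And>x. 0 < x \<Longrightarrow> x * u' x \<le> u x"
    and equation: "\<And>x. 0 < x \<Longrightarrow> u'' x = - (x powr \<sigma> * u x powr p)"
begin

lemma second_deriv_neg: "0 < x \<Longrightarrow> u'' x < 0"
  using equation[of x] pos[of x] by simp

lemma u_mono: "0 < x \<Longrightarrow> x \<le> y \<Longrightarrow> u x \<le> u y"
  using DERIV_nonneg_imp_nondecreasing[of x y u] has_deriv deriv_nonneg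
  by (metis less_le_trans)

lemma powr_u_mono:
  assumes "0 \<le> p" "0 < x" "x \<le> y"
  shows "u x powr p \<le> u y powr p"
  using assms pos[of x] u_mono[of x y] by (simp add: powr_mono2)

lemma second_deriv_le:
  assumes "0 < t" "L * t powr \<gamma> \<le> u t powr p"
  shows "u'' t \<le> - L * t powr (\<sigma> + \<gamma>)"
proof -
  have "t powr \<sigma> * (L * t powr \<gamma>) \<le> t powr \<sigma> * u t powr p"
    using assms by (intro mult_left_mono) auto
  then show ?thesis
    using equation[OF \<open>0 < t\<close>] by (simp add: powr_add algebra_simps)
qed

lemma no_powr_lower_bound:
  assumes "0 < L" "-1 \<le> \<sigma> + \<gamma>"
    and lower: "\<And>t. 1 \<le> t \<Longrightarrow> L * t powr \<gamma> \<le> u t powr p"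
  shows False
proof -
  have "filterlim u' at_bot at_top"
    using assms has_deriv2 second_deriv_le
    by (intro deriv_le_neg_powr_imp_at_bot[of 1 L "\<sigma> + \<gamma>" u' u'']) auto
  then obtain t where "1 \<le> t" "u' t < 0"
    using filterlim_at_bot_imp_ex_less by blast
  then show False
    using deriv_nonneg[of t] by simp
qed

lemma tail_bound:
  assumes "0 \<le> p" "\<sigma> < -1" "0 < x"
  shows "x powr (\<sigma> + 2) \<le> (- \<sigma> - 1) * u x powr (1 - p)"
proof -
  have "u x powr p * x powr (\<sigma> + 1) / (- \<sigma> - 1) \<le> u' x"
  proof (rule deriv_le_neg_powr_lower_bound[of x \<sigma> u' u''])
    fix t assume "x \<le> t"
    then have "0 < t" using \<open>0 < x\<close> by simp
    then show "(u' has_real_derivative u'' t) (at t)" "0 \<le> u' t"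
      using has_deriv2 deriv_nonneg by auto
    show "u'' t \<le> - (u x powr p) * t powr \<sigma>"
      using second_deriv_le[of t "u x powr p" 0] powr_u_mono[of x t] assms \<open>0 < t\<close> \<open>x \<le> t\<close>
      by simp
  qed (use assms in auto)
  then have "x * (u x powr p * x powr (\<sigma> + 1) / (- \<sigma> - 1)) \<le> x * u' x"
    using \<open>0 < x\<close> by (intro mult_left_mono) auto
  also have "\<dots> \<le> u x"
    using mult_deriv_le \<open>0 < x\<close> by simp
  also have "x * (u x powr p * x powr (\<sigma> + 1) / (- \<sigma> - 1)) = u x powr p * x powr (\<sigma> + 2) / (- \<sigma> - 1)"
    using \<open>0 < x\<close> by (simp add: powr_mult_base add.commute)
  finally have "x powr (\<sigma> + 2) \<le> (- \<sigma> - 1) * u x / u x powr p"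
    using assms pos[OF \<open>0 < x\<close>] by (simp add: field_simps)
  also have "\<dots> = (- \<sigma> - 1) * u x powr (1 - p)"
    using pos[OF \<open>0 < x\<close>] by (simp add: powr_diff)
  finally show ?thesis .
qed

lemma absurd_p_neg:
  assumes "p < 0" "-1 \<le> \<sigma> + p"
  shows False
proof -
  define M where "M = u 1 + u' 1"
  have "0 < M"
    using pos[of 1] deriv_nonneg[of 1] by (simp add: M_def)
  have linear: "u t \<le> M * t" if "1 \<le> t" for t
  proof -
    have "u t \<le> u 1 + u' 1 * (t - 1)"
      using concave_le_tangent(1)[of 1 t u u' u''] that has_deriv has_deriv2 second_deriv_neg
      by (simp add: less_imp_le)
    also have "\<dots> \<le> M * t"
    proof -
      have "u 1 \<le> t * u 1"
        using that pos[of 1] by (simp add: mult_le_cancel_right1)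
      then show ?thesis
        using deriv_nonneg[of 1] by (simp add: M_def algebra_simps)
    qed
    finally show ?thesis .
  qed
  show False
  proof (rule no_powr_lower_bound)
    fix t :: real assume "1 \<le> t"
    then have "(M * t) powr p \<le> u t powr p"
      using linear pos[of t] \<open>p < 0\<close> by (intro powr_mono2') auto
    then show "M powr p * t powr p \<le> u t powr p"
      using \<open>0 < M\<close> \<open>1 \<le> t\<close> by (simp add: powr_mult)
  qed (use \<open>0 < M\<close> assms in auto)
qed

lemma absurd_sigma_ge_neg_one:
  assumes "0 \<le> p" "-1 \<le> \<sigma>"
  shows False
proof (rule no_powr_lower_bound)
  fix t :: real assume "1 \<le> t"
  then show "u 1 powr p * t powr 0 \<le> u t powr p"
    using powr_u_mono[of 1 t] assms by simp
qed (use assms pos[of 1] in auto)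

lemma absurd_sigma_between_p_ge_one:
  assumes "-2 < \<sigma>" "\<sigma> < -1" "1 \<le> p"
  shows False
proof -
  define B where "B = (- \<sigma> - 1) * u 1 powr (1 - p)"
  have "\<forall>\<^sub>F x in at_top. B < x powr (\<sigma> + 2)"
    using real_powr_at_top[of "\<sigma> + 2"] assms by (simp add: filterlim_at_top_dense)
  then have "\<forall>\<^sub>F x in at_top. 1 \<le> x \<and> B < x powr (\<sigma> + 2)"
    using eventually_ge_at_top[of 1] by (rule eventually_conj[rotated])
  then obtain x where "1 \<le> x" "B < x powr (\<sigma> + 2)"
    by (auto simp: eventually_at_top_linorder)
  moreover have "u x powr (1 - p) \<le> u 1 powr (1 - p)"
    using assms pos[of 1] u_mono[of 1 x] \<open>1 \<le> x\<close> by (intro powr_mono2') auto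
  then have "(- \<sigma> - 1) * u x powr (1 - p) \<le> B"
    using assms by (simp add: B_def)
  ultimately show False
    using tail_bound[of x] assms by simp
qed

lemma absurd_sigma_between_p_lt_one:
  assumes "0 \<le> p" "p < 1" "\<sigma> < -1" "-1 \<le> \<sigma> + p"
  shows False
proof -
  define K where "K = - \<sigma> - 1"
  define q where "q = 1 / (1 - p)"
  define a where "a = (\<sigma> + 2) * q"
  define L where "L = K powr (- q)"
  have "0 < K" "0 < q" "1 \<le> a" "0 < L"
    using assms by (auto simp: K_def q_def a_def L_def field_simps)
  have growth: "L * x powr a \<le> u x" if "1 \<le> x" for x
  proof -
    have "(x powr (\<sigma> + 2)) powr q \<le> (K * u x powr (1 - p)) powr q"
      using tail_bound[of x] assms that \<open>0 < q\<close> by (intro powr_mono2) (auto simp: K_def)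
    also have "\<dots> = K powr q * u x"
      using \<open>0 < K\<close> pos[of x] that \<open>p < 1\<close> by (simp add: powr_mult powr_powr q_def)
    finally have "x powr a \<le> K powr q * u x"
      by (simp add: powr_powr a_def)
    then show ?thesis
      using \<open>0 < K\<close> by (simp add: L_def powr_minus field_simps)
  qed
  show False
  proof (rule no_powr_lower_bound)
    fix t :: real assume "1 \<le> t"
    then have "(L * t powr a) powr p \<le> u t powr p"
      using growth \<open>0 \<le> p\<close> \<open>0 < L\<close> by (intro powr_mono2) auto
    then show "L powr p * t powr (a * p) \<le> u t powr p"
      using \<open>0 < L\<close> \<open>1 \<le> t\<close> by (simp add: powr_mult powr_powr)
  next
    have "p \<le> a * p"
      using \<open>1 \<le> a\<close> \<open>0 \<le> p\<close> by (simp add: mult_le_cancel_right1)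
    then show "-1 \<le> \<sigma> + a * p"
      using assms by linarith
  qed (use \<open>0 < L\<close> in simp)
qed

lemma absurd_sigma_neg_two_p_gt_one:
  assumes "\<sigma> = -2" "1 < p"
  shows False
proof -
  have bounded: "u x \<le> 1" if "0 < x" for x
  proof (rule ccontr)
    assume "\<not> u x \<le> 1"
    then have "u x powr (1 - p) < 1"
      using \<open>1 < p\<close> by (intro powr_less_one) auto
    moreover have "1 \<le> u x powr (1 - p)"
      using tail_bound[OF _ _ that] assms that by simp
    ultimately show False
      by simp
  qed
  define c where "c = u 1 powr p"
  have "filterlim (\<lambda>x. x * u' x - u x) at_bot at_top"
  proof (rule deriv_le_neg_powr_imp_at_bot[of 1 c "-1"])
    fix t :: real assume "1 \<le> t"
    then show "((\<lambda>x. x * u' x - u x) has_real_derivative t * u'' t) (at t)"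
      by (auto intro!: derivative_eq_intros has_deriv has_deriv2)
    have "u'' t \<le> - c * t powr (-2)"
      using second_deriv_le[of t c 0] powr_u_mono[of 1 t] assms \<open>1 \<le> t\<close> by (simp add: c_def)
    then have "t * u'' t \<le> t * (- c * t powr (-2))"
      using \<open>1 \<le> t\<close> by (intro mult_left_mono) auto
    also have "\<dots> = - c * t powr (-1)"
      using \<open>1 \<le> t\<close> by (simp add: powr_minus_divide powr_numeral power2_eq_square)
    finally show "t * u'' t \<le> - c * t powr (-1)" .
  qed (use pos[of 1] in \<open>auto simp: c_def\<close>)
  then obtain x where "1 \<le> x" "x * u' x - u x < -1"
    using filterlim_at_bot_imp_ex_less by blast
  moreover have "0 \<le> x * u' x"
    using \<open>1 \<le> x\<close> deriv_nonneg[of x] by simp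
  ultimately show False
    using bounded[of x] \<open>1 \<le> x\<close> by linarith
qed

lemma absurd_sigma_neg_two_p_one:
  assumes "\<sigma> = -2" "p = 1"
  shows False
proof (rule euler_equation_no_positive_solution[OF has_deriv has_deriv2 _ pos])
  fix x :: real assume "0 < x"
  then show "x\<^sup>2 * u'' x = - u x"
    using equation[of x] pos[of x] assms by (simp add: powr_minus_divide powr_realpow)
qed

lemma absurd_upper_region:
  assumes "-2 \<le> \<sigma>" "-1 \<le> \<sigma> + p"
  shows False
proof -
  consider "p < 0" | "0 \<le> p" "-1 \<le> \<sigma>" | "-2 < \<sigma>" "\<sigma> < -1" "1 \<le> p"
    | "0 \<le> p" "p < 1" "\<sigma> < -1" | "\<sigma> = -2" "1 < p" | "\<sigma> = -2" "p = 1"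
    using assms by linarith
  then show False
  proof cases
    case 1
    then show False using absurd_p_neg assms by blast
  next
    case 2
    then show False using absurd_sigma_ge_neg_one by blast
  next
    case 3
    then show False using absurd_sigma_between_p_ge_one by blast
  next
    case 4
    then show False using absurd_sigma_between_p_lt_one assms by blast
  next
    case 5
    then show False using absurd_sigma_neg_two_p_gt_one by blast
  next
    case 6
    then show False using absurd_sigma_neg_two_p_one by blast
  qed
qed

lemma kelvin_transform:
  "halfline_solution (\<lambda>x. x * u (1 / x)) (\<lambda>x. u (1 / x) - u' (1 / x) / x)
     (\<lambda>x. u'' (1 / x) / x ^ 3) (- 3 - \<sigma> - p) p"
proof
  fix x :: real assume "0 < x"
  then have "0 < 1 / x" by simp
  have du: "((\<lambda>x. u (1 / x)) has_real_derivative - u' (1 / x) / x\<^sup>2) (at x)"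
    by (rule has_real_derivative_comp_reciprocal[OF has_deriv]) (use \<open>0 < x\<close> in auto)
  have du': "((\<lambda>x. u' (1 / x)) has_real_derivative - u'' (1 / x) / x\<^sup>2) (at x)"
    by (rule has_real_derivative_comp_reciprocal[OF has_deriv2]) (use \<open>0 < x\<close> in auto)
  show "((\<lambda>x. x * u (1 / x)) has_real_derivative u (1 / x) - u' (1 / x) / x) (at x)"
    using \<open>0 < x\<close> by (auto intro!: derivative_eq_intros du simp: field_simps power2_eq_square)
  show "((\<lambda>x. u (1 / x) - u' (1 / x) / x) has_real_derivative u'' (1 / x) / x ^ 3) (at x)"
    using \<open>0 < x\<close> by (auto intro!: derivative_eq_intros du du' simp: field_simps power2_eq_square power3_eq_cube)
  show "0 < x * u (1 / x)"
    using pos[OF \<open>0 < 1 / x\<close>] \<open>0 < x\<close> by simp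
  show "0 \<le> u (1 / x) - u' (1 / x) / x"
    using mult_deriv_le[OF \<open>0 < 1 / x\<close>] by simp
  show "x * (u (1 / x) - u' (1 / x) / x) \<le> x * u (1 / x)"
    using deriv_nonneg[OF \<open>0 < 1 / x\<close>] \<open>0 < x\<close> by (simp add: algebra_simps)
  have "x powr (- 3 - \<sigma> - p) * (x * u (1 / x)) powr p = x powr (- 3 - \<sigma>) * u (1 / x) powr p"
    using \<open>0 < x\<close> by (simp add: powr_mult powr_add[symmetric])
  also have "\<dots> = (1 / x) powr \<sigma> * u (1 / x) powr p / x ^ 3"
  proof -
    have "x powr (- 3 - \<sigma>) = 1 / (x powr 3 * x powr \<sigma>)"
      by (simp add: powr_diff powr_minus_divide)
    moreover have "(1 / x) powr \<sigma> = 1 / x powr \<sigma>"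
      using \<open>0 < x\<close> by (simp add: powr_divide)
    ultimately show ?thesis
      using \<open>0 < x\<close> by (simp add: powr_numeral)
  qed
  finally show "u'' (1 / x) / x ^ 3 = - (x powr (- 3 - \<sigma> - p) * (x * u (1 / x)) powr p)"
    using equation[OF \<open>0 < 1 / x\<close>] by simp
qed

lemma parameter_range: "(\<sigma> < -2 \<and> -1 < \<sigma> + p) \<or> (-2 < \<sigma> \<and> \<sigma> + p < -1)"
proof (rule ccontr)
  assume "\<not> ?thesis"
  then consider "-2 \<le> \<sigma>" "-1 \<le> \<sigma> + p" | "\<sigma> \<le> -2" "\<sigma> + p \<le> -1"
    by linarith
  then show False
  proof cases
    case 1
    then show False by (rule absurd_upper_region)
  next
    case 2
    then show False
      using halfline_solution.absurd_upper_region[OF kelvin_transform] by simp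
  qed
qed

end

lemma upow_nonneg: "0 \<le> upow t p"
  by (simp add: upow_def)

lemma classical_solution_on_pos:
  assumes "classical_solution \<sigma> p u"
  obtains u' u'' where "\<And>x. 0 < x \<Longrightarrow> (u has_real_derivative u' x) (at x)"
    and "\<And>x. 0 < x \<Longrightarrow> (u' has_real_derivative u'' x) (at x)"
    and "\<And>x. 0 < x \<Longrightarrow> u'' x = - (x powr \<sigma> * upow (u x) p)"
proof -
  obtain u' u'' where sol: "\<And>x. x \<in> sol_domain \<sigma> \<Longrightarrow> (u has_real_derivative u' x) (at x) \<and>
      (u' has_real_derivative u'' x) (at x) \<and> - u'' x = weight \<sigma> x * upow (u x) p"
    using assms unfolding classical_solution_def by blast
  have dom: "x \<in> sol_domain \<sigma>" and weight: "weight \<sigma> x = x powr \<sigma>" if "0 < x" for x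
    using that by (auto simp: sol_domain_def weight_def)
  show ?thesis
  proof (rule that)
    show "(u has_real_derivative u' x) (at x)" "(u' has_real_derivative u'' x) (at x)"
      if "0 < x" for x
      using sol[OF dom[OF that]] by blast+
    show "u'' x = - (x powr \<sigma> * upow (u x) p)" if "0 < x" for x
      using sol[OF dom[OF that]] weight[OF that] by simp
  qed
qed

lemma nonneg_classical_solution_halfline:
  assumes sol: "classical_solution \<sigma> p u" and nonneg: "\<And>x. 0 \<le> u x"
    and "0 < x0" "0 < u x0"
  shows "\<exists>u' u''. halfline_solution u u' u'' \<sigma> p"
proof -
  obtain u' u'' where u': "\<And>x. 0 < x \<Longrightarrow> (u has_real_derivative u' x) (at x)"
    and u'': "\<And>x. 0 < x \<Longrightarrow> (u' has_real_derivative u'' x) (at x)"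
    and eq: "\<And>x. 0 < x \<Longrightarrow> u'' x = - (x powr \<sigma> * upow (u x) p)"
    using classical_solution_on_pos[OF sol] by blast
  have concave: "u'' x \<le> 0" if "0 < x" for x
    using eq[OF that] upow_nonneg[of "u x" p] by simp
  have deriv_nonneg: "0 \<le> u' x" if "0 < x" for x
    by (rule concave_nonneg_imp_deriv_nonneg[OF u' u'' concave nonneg that])
  have pos: "0 < u x" if "0 < x" for x
  proof (rule ccontr)
    assume "\<not> 0 < u x"
    then have "u x = 0"
      using nonneg[of x] by simp
    then have "u x0 = 0"
      using concave_nonneg_zero_imp_zero[OF u' u'' concave nonneg that] \<open>0 < x0\<close> by blast
    then show False
      using \<open>0 < u x0\<close> by simp
  qed
  have "isCont u 0"
    using sol by (simp add: classical_solution_def continuous_on_eq_continuous_at)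
  have mult_deriv_le: "x * u' x \<le> u x" if "0 < x" for x
    by (rule concave_mult_deriv_le[OF u' u'' concave \<open>isCont u 0\<close> nonneg that])
  have "u'' x = - (x powr \<sigma> * u x powr p)" if "0 < x" for x
    using eq[OF that] pos[OF that] by (simp add: upow_def)
  with u' u'' pos deriv_nonneg mult_deriv_le have "halfline_solution u u' u'' \<sigma> p"
    by unfold_locales
  then show ?thesis by blast
qed

lemma classical_solution_reflect:
  assumes "classical_solution \<sigma> p u"
  shows "classical_solution \<sigma> p (\<lambda>x. u (- x))"
proof -
  obtain u' u'' where sol: "\<And>x. x \<in> sol_domain \<sigma> \<Longrightarrow> (u has_real_derivative u' x) (at x) \<and>
        (u' has_real_derivative u'' x) (at x) \<and> isCont u'' x \<and> (p < 0 \<longrightarrow> u x > 0) \<and>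
        - u'' x = weight \<sigma> x * upow (u x) p" and cont: "continuous_on UNIV u"
    using assms unfolding classical_solution_def by blast
  have "continuous_on UNIV (\<lambda>x. u (- x))"
    by (rule continuous_on_compose2[OF cont]) (auto intro!: continuous_intros)
  moreover have "\<exists>v' v''. \<forall>x \<in> sol_domain \<sigma>. ((\<lambda>x. u (- x)) has_real_derivative v' x) (at x) \<and>
      (v' has_real_derivative v'' x) (at x) \<and> isCont v'' x \<and> (p < 0 \<longrightarrow> u (- x) > 0) \<and>
      - v'' x = weight \<sigma> x * upow (u (- x)) p"
  proof (intro exI ballI conjI)
    fix x assume "x \<in> sol_domain \<sigma>"
    have "- x \<in> sol_domain \<sigma>"
      using \<open>x \<in> sol_domain \<sigma>\<close> by (simp add: sol_domain_def split: if_splits)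
    then have u': "(u has_real_derivative u' (- x)) (at (- x))"
      and u'': "(u' has_real_derivative u'' (- x)) (at (- x))"
      and cont'': "isCont u'' (- x)"
      and pos: "p < 0 \<longrightarrow> u (- x) > 0"
      and eq: "- u'' (- x) = weight \<sigma> (- x) * upow (u (- x)) p"
      using sol by blast+
    show "((\<lambda>x. u (- x)) has_real_derivative - u' (- x)) (at x)"
      using DERIV_mirror[THEN iffD1, OF u'] by simp
    show "((\<lambda>x. - u' (- x)) has_real_derivative u'' (- x)) (at x)"
      using DERIV_minus[OF DERIV_mirror[THEN iffD1, OF u'']] by simp
    show "isCont (\<lambda>x. u'' (- x)) x"
      using cont'' isCont_o2[where f = "\<lambda>x. - x" and g = u'' and a = x] by simp
    show "p < 0 \<longrightarrow> u (- x) > 0"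
      by (fact pos)
    show "- u'' (- x) = weight \<sigma> x * upow (u (- x)) p"
      using eq by (simp add: weight_def)
  qed
  ultimately show ?thesis
    unfolding classical_solution_def by (rule conjI)
qed

lemma exists_halfline_solution:
  assumes sol: "classical_solution \<sigma> p u" and nonneg: "\<And>x. 0 \<le> u x" and "u x0 \<noteq> 0"
  shows "\<exists>w w' w''. halfline_solution w w' w'' \<sigma> p"
proof -
  have "0 < u x0"
    using nonneg[of x0] \<open>u x0 \<noteq> 0\<close> by simp
  consider "0 < x0" | "x0 < 0" | "x0 = 0"
    by linarith
  then show ?thesis
  proof cases
    case 1
    then show ?thesis
      using nonneg_classical_solution_halfline[OF sol nonneg _ \<open>0 < u x0\<close>] by blast
  next
    case 2
    have "0 \<le> u (- x)" for x
      using nonneg by simp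
    moreover have "0 < - x0" "0 < u (- (- x0))"
      using 2 \<open>0 < u x0\<close> by simp_all
    ultimately show ?thesis
      using nonneg_classical_solution_halfline[OF classical_solution_reflect[OF sol]] by blast
  next
    case 3
    have "(u \<longlongrightarrow> u 0) (at_right 0)"
      using sol by (simp add: classical_solution_def continuous_on_eq_continuous_at isCont_def
          filterlim_at_split)
    then have "\<forall>\<^sub>F x in at_right 0. 0 < u x"
      using order_tendstoD(1) \<open>0 < u x0\<close> 3 by blast
    then obtain b where "0 < b" "\<And>y. 0 < y \<Longrightarrow> y < b \<Longrightarrow> 0 < u y"
      by (auto simp: eventually_at_right_field)
    then have "0 < b / 2" "0 < u (b / 2)"
      by simp_all
    then show ?thesis
      using nonneg_classical_solution_halfline[OF sol nonneg] by blast
  qed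
qed

lemma nonneg_classical_solution_sigma_nonneg_eq_zero:
  assumes sol: "classical_solution \<sigma> p u" and "0 \<le> \<sigma>" and nonneg: "\<And>x. 0 \<le> u x"
  shows "u x = 0"
proof -
  obtain u' u'' where "\<forall>x \<in> sol_domain \<sigma>. (u has_real_derivative u' x) (at x) \<and>
      (u' has_real_derivative u'' x) (at x) \<and> - u'' x = weight \<sigma> x * upow (u x) p"
    using sol unfolding classical_solution_def by blast
  moreover have "sol_domain \<sigma> = UNIV"
    using \<open>0 \<le> \<sigma>\<close> by (simp add: sol_domain_def)
  ultimately have u': "\<And>x. (u has_real_derivative u' x) (at x)"
    and u'': "\<And>x. (u' has_real_derivative u'' x) (at x)"
    and eq: "\<And>x. - u'' x = weight \<sigma> x * upow (u x) p"
    by blast+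
  have concave: "u'' x \<le> 0" for x
  proof -
    have "0 \<le> weight \<sigma> x * upow (u x) p"
      by (simp add: weight_def upow_def)
    then show ?thesis
      using eq[of x] by linarith
  qed
  have u'_zero: "u' y = 0" for y
    by (rule concave_nonneg_deriv_eq_zero[OF u' u'' concave nonneg])
  then have "u' = (\<lambda>_. 0)"
    by auto
  with u''[of 1] have "((\<lambda>_. 0) has_real_derivative u'' 1) (at 1)"
    by simp
  then have "u'' 1 = 0"
    using DERIV_const DERIV_unique by blast
  moreover have "weight \<sigma> 1 = 1"
    by (simp add: weight_def)
  ultimately have "upow (u 1) p = 0"
    using eq[of 1] by simp
  then have "u 1 = 0"
    by (simp add: upow_def split: if_splits)
  moreover have "u x = u 1"
    using u' u'_zero by (metis DERIV_isconst_all)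
  ultimately show ?thesis by simp
qed

lemma abs_powr_eq_square_powr: "\<bar>x\<bar> powr r = (x * x) powr (r / 2)" for x r :: real
proof -
  have "(x * x) powr (r / 2) = (\<bar>x\<bar> * \<bar>x\<bar>) powr (r / 2)"
    by (simp add: abs_mult_self_eq)
  also have "\<dots> = \<bar>x\<bar> powr (r / 2) * \<bar>x\<bar> powr (r / 2)"
    by (rule powr_mult)
  also have "\<dots> = \<bar>x\<bar> powr r"
    by (simp add: powr_add[symmetric])
  finally show ?thesis by simp
qed

lemma power_function_equation:
  fixes \<sigma> p a c x :: real
  assumes "\<sigma> \<noteq> 0" "0 < c" "c powr (p - 1) = a * (1 - a)" "a * (1 - p) = \<sigma> + 2" "x \<noteq> 0"
  shows "weight \<sigma> x * upow (c * (x * x) powr (a / 2)) p = c * a * (1 - a) * (x * x) powr (a / 2 - 1)"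
proof -
  have "0 < x * x"
    using \<open>x \<noteq> 0\<close> not_real_square_gt_zero by blast
  have "upow (c * (x * x) powr (a / 2)) p = c powr p * (x * x) powr (a / 2 * p)"
    using powr_mult[of c "(x * x) powr (a / 2)" p] \<open>0 < c\<close> \<open>x \<noteq> 0\<close>
    by (simp add: upow_def powr_powr)
  moreover have "weight \<sigma> x = (x * x) powr (\<sigma> / 2)"
    using \<open>\<sigma> \<noteq> 0\<close> by (simp add: weight_def abs_powr_eq_square_powr)
  ultimately have "weight \<sigma> x * upow (c * (x * x) powr (a / 2)) p
      = c powr p * (x * x) powr (\<sigma> / 2 + a / 2 * p)"
    by (simp add: powr_add)
  also have "\<sigma> / 2 + a / 2 * p = a / 2 - 1"
    using assms(4) by (simp add: field_simps)
  also have "c powr p = c * c powr (p - 1)"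
    using \<open>0 < c\<close> powr_mult_base[of c "p - 1"] by simp
  finally show ?thesis
    using assms(3) by (simp add: algebra_simps)
qed

lemma classical_solution_power:
  fixes \<sigma> p a :: real
  assumes "\<sigma> < 0" "0 < a" "a < 1" "p \<noteq> 1" "a * (1 - p) = \<sigma> + 2"
  shows "classical_solution \<sigma> p (\<lambda>x. (a * (1 - a)) powr (1 / (p - 1)) * \<bar>x\<bar> powr a)"
proof -
  define c where "c = (a * (1 - a)) powr (1 / (p - 1))"
  define u where "u x = c * (x * x) powr (a / 2)" for x
  define u' where "u' x = c * a * x * (x * x) powr (a / 2 - 1)" for x
  define u'' where "u'' x = c * a * (a - 1) * (x * x) powr (a / 2 - 1)" for x
  have "0 < c"
    using assms by (simp add: c_def)
  have "c powr (p - 1) = a * (1 - a)"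
    using assms by (simp add: c_def powr_powr)
  have "continuous_on UNIV u"
    unfolding u_def using assms by (intro continuous_intros continuous_on_powr') auto
  moreover have "(u has_real_derivative u' x) (at x) \<and> (u' has_real_derivative u'' x) (at x) \<and>
      isCont u'' x \<and> 0 < u x \<and> - u'' x = weight \<sigma> x * upow (u x) p" if "x \<noteq> 0" for x
  proof (intro conjI)
    have "0 < x * x"
      using that not_real_square_gt_zero by blast
    show "(u has_real_derivative u' x) (at x)"
      unfolding u_def u'_def using \<open>0 < x * x\<close>
      by (auto intro!: derivative_eq_intros simp: algebra_simps)
    have "x * x * (x * x) powr (a / 2 - 1 - 1) = (x * x) powr (a / 2 - 1)"
      using \<open>0 < x * x\<close> by (simp add: powr_mult_base)
    then show "(u' has_real_derivative u'' x) (at x)"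
      unfolding u'_def u''_def using \<open>0 < x * x\<close>
      by (auto intro!: derivative_eq_intros simp: algebra_simps)
    show "isCont u'' x"
      unfolding u''_def using \<open>0 < x * x\<close> by (auto intro!: continuous_intros)
    show "0 < u x"
      using \<open>0 < c\<close> that by (simp add: u_def)
    show "- u'' x = weight \<sigma> x * upow (u x) p"
      using power_function_equation[OF _ \<open>0 < c\<close> \<open>c powr (p - 1) = a * (1 - a)\<close> assms(5) that]
        assms(1) by (simp add: u_def u''_def algebra_simps)
  qed
  moreover have "sol_domain \<sigma> = - {0}"
    using assms by (simp add: sol_domain_def)
  moreover have "(\<lambda>x. (a * (1 - a)) powr (1 / (p - 1)) * \<bar>x\<bar> powr a) = u"
    by (simp add: fun_eq_iff u_def c_def abs_powr_eq_square_powr)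
  ultimately show ?thesis
    unfolding classical_solution_def by auto
qed

lemma exists_nonneg_classical_solution:
  fixes \<sigma> p :: real
  assumes "(\<sigma> < -2 \<and> p > -1 - \<sigma>) \<or> (-2 < \<sigma> \<and> \<sigma> < 0 \<and> p < -1 - \<sigma>)"
  shows "\<exists>u. classical_solution \<sigma> p u \<and> (\<forall>x. u x \<ge> 0) \<and> (\<exists>x. u x \<noteq> 0)"
proof -
  define a where "a = (\<sigma> + 2) / (1 - p)"
  have "\<sigma> < 0" "p \<noteq> 1"
    using assms by auto
  then have a_eq: "a * (1 - p) = \<sigma> + 2"
    by (simp add: a_def)
  have "0 < a \<and> a < 1"
    using assms
  proof
    assume "\<sigma> < -2 \<and> p > -1 - \<sigma>"
    then show ?thesis
      by (simp add: a_def divide_neg_neg divide_less_eq)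
  next
    assume "-2 < \<sigma> \<and> \<sigma> < 0 \<and> p < -1 - \<sigma>"
    then show ?thesis
      by (simp add: a_def divide_less_eq)
  qed
  then have sol: "classical_solution \<sigma> p (\<lambda>x. (a * (1 - a)) powr (1 / (p - 1)) * \<bar>x\<bar> powr a)"
    using classical_solution_power \<open>\<sigma> < 0\<close> \<open>p \<noteq> 1\<close> a_eq by blast
  have "0 < (a * (1 - a)) powr (1 / (p - 1))"
    using \<open>0 < a \<and> a < 1\<close> by simp
  then show ?thesis
    using sol by (intro exI[of _ "\<lambda>x. (a * (1 - a)) powr (1 / (p - 1)) * \<bar>x\<bar> powr a"]) auto
qed

theorem theorem1p2:
  fixes p \<sigma> :: real
  shows "(\<exists>u. classical_solution \<sigma> p u \<and> (\<forall>x. u x \<ge> 0) \<and> (\<exists>x. u x \<noteq> 0)) \<longleftrightarrow>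
         ((\<sigma> < -2 \<and> p > -1 - \<sigma>) \<or> (-2 < \<sigma> \<and> \<sigma> < 0 \<and> p < -1 - \<sigma>))"
proof
  assume "\<exists>u. classical_solution \<sigma> p u \<and> (\<forall>x. u x \<ge> 0) \<and> (\<exists>x. u x \<noteq> 0)"
  then obtain u x0 where sol: "classical_solution \<sigma> p u" and nonneg: "\<And>x. 0 \<le> u x"
    and "u x0 \<noteq> 0"
    by blast
  have "\<sigma> < 0"
    using nonneg_classical_solution_sigma_nonneg_eq_zero[OF sol _ nonneg] \<open>u x0 \<noteq> 0\<close> by force
  moreover obtain w w' w'' where "halfline_solution w w' w'' \<sigma> p"
    using exists_halfline_solution[OF sol nonneg \<open>u x0 \<noteq> 0\<close>] by blast
  then have "(\<sigma> < -2 \<and> -1 < \<sigma> + p) \<or> (-2 < \<sigma> \<and> \<sigma> + p < -1)"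
    by (rule halfline_solution.parameter_range)
  ultimately show "(\<sigma> < -2 \<and> p > -1 - \<sigma>) \<or> (-2 < \<sigma> \<and> \<sigma> < 0 \<and> p < -1 - \<sigma>)"
    by linarith
next
  assume "(\<sigma> < -2 \<and> p > -1 - \<sigma>) \<or> (-2 < \<sigma> \<and> \<sigma> < 0 \<and> p < -1 - \<sigma>)"
  then show "\<exists>u. classical_solution \<sigma> p u \<and> (\<forall>x. u x \<ge> 0) \<and> (\<exists>x. u x \<noteq> 0)"
    by (rule exists_nonneg_classical_solution)
qed

end
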